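(* Let $\mathcal{X}, \mathcal{T} \in M_{2^k}(R)$ be two Suslin matrices with $\mathcal{X}\overline{\mathcal{X}} =0$, and let $\mathcal{S} = \begin{pmatrix} a & \mathcal{T}\\ -\overline{\mathcal{T}} & b \end{pmatrix}$. Then \[\begin{pmatrix} 1 & \mathcal{X}\\ 0 & 1 \end{pmatrix} \mathcal{S} \begin{pmatrix} 1 & 0\\ -\overline{\mathcal{X}} & 1 \end{pmatrix} = \begin{pmatrix} a - \langle \mathcal{X},\mathcal{T}\rangle & \mathcal{T} + b\mathcal{X}\\ -\overline{\mathcal{T}} - b\overline{\mathcal{X}} & b \end{pmatrix},\] \[\begin{pmatrix} 1 & 0\\ -\overline{\mathcal{X}} & 1 \end{pmatrix} \mathcal{S} \begin{pmatrix} 1 & \mathcal{X} \\ 0 & 1 \end{pmatrix} = \begin{pmatrix} a & \mathcal{T} + a\mathcal{X}\\ -\overline{\mathcal{T}} -a\overline{\mathcal{X}} & b - \langle \mathcal{X},\mathcal{T}\rangle \end{pmatrix}.\]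
   Context: $R$ is a commutative ring, $a,b\in R$. Suslin matrices $\mathcal{S}_{m}(v,w)$ (size $2^m$) for $v=(a_1,\dots,a_{m+1}),w=(b_1,\dots,b_{m+1})\in R^{m+1}$ are defined recursively by $\mathcal{S}_1(v,w)=\begin{pmatrix} a_1 & a_2\\ -b_2 & b_1\end{pmatrix}$, $\overline{\mathcal{S}_1(v,w)}=\begin{pmatrix} b_1 & -a_2\\ b_2 & a_1\end{pmatrix}$, and $\mathcal{S}_{m}(v,w)=\begin{pmatrix} a_1 & \mathcal{S}_{m-1}(v',w')\\ -\overline{\mathcal{S}_{m-1}(v',w')} & b_1\end{pmatrix}$, $\overline{\mathcal{S}_{m}(v,w)}=\begin{pmatrix} b_1 & -\mathcal{S}_{m-1}(v',w')\\ \overline{\mathcal{S}_{m-1}(v',w')} & a_1\end{pmatrix}$ where $v=(a_1,v')$, $w=(b_1,w')$. They satisfy $\mathcal{S}\overline{\mathcal{S}}=\overline{\mathcal{S}}\mathcal{S}=(v\cdot w^\intercal)I$. The bilinear form is $\langle \mathcal{S}_1,\mathcal{S}_2\rangle = \mathcal{S}_1\overline{\mathcal{S}_2}+\mathcal{S}_2\overline{\mathcal{S}_1}$ (a scalar). *)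

theory Defs
  imports "Jordan_Normal_Form.Matrix"
begin

text \<open>Vectors v = (a1,...,a(m+1)), w = (b1,...,b(m+1)) are lists.
  suslin_pair m v w = (S_m(v,w), conjugate of S_m(v,w)), a pair of 2^m x 2^m matrices.
  The base case m = 0 is the 1x1 pair ([a1],[b1]); with it the recursion yields exactly
  the paper's S_1 and its conjugate, and then the paper's recursion for m >= 2.\<close>
primrec suslin_pair :: "nat \<Rightarrow> 'a::comm_ring_1 list \<Rightarrow> 'a list \<Rightarrow> 'a mat \<times> 'a mat" where
  "suslin_pair 0 v w = (mat 1 1 (\<lambda>_. hd v), mat 1 1 (\<lambda>_. hd w))"
| "suslin_pair (Suc m) v w =
     (let S = fst (suslin_pair m (tl v) (tl w));
          Sb = snd (suslin_pair m (tl v) (tl w));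
          n = 2 ^ m
      in (four_block_mat (hd v \<cdot>\<^sub>m 1\<^sub>m n) S (- Sb) (hd w \<cdot>\<^sub>m 1\<^sub>m n),
          four_block_mat (hd w \<cdot>\<^sub>m 1\<^sub>m n) (- S) Sb (hd v \<cdot>\<^sub>m 1\<^sub>m n)))"

definition suslin :: "nat \<Rightarrow> 'a::comm_ring_1 list \<Rightarrow> 'a list \<Rightarrow> 'a mat" where
  "suslin m v w = fst (suslin_pair m v w)"

definition suslin_bar :: "nat \<Rightarrow> 'a::comm_ring_1 list \<Rightarrow> 'a list \<Rightarrow> 'a mat" where
  "suslin_bar m v w = snd (suslin_pair m v w)"

definition suslin_form :: "nat \<Rightarrow> 'a::comm_ring_1 list \<Rightarrow> 'a list \<Rightarrow> 'a list \<Rightarrow> 'a list \<Rightarrow> 'a mat" where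
  "suslin_form m v w v' w' =
     suslin m v w * suslin_bar m v' w' + suslin m v' w' * suslin_bar m v w"

end

theory Submission
  imports Defs
begin

text \<open>Both sides are products of 2 \<times> 2 block matrices; multiplying them out gives the
  right-hand sides as soon as \<open>bar X * X = 0\<close> and the form
  \<open><X, T> = X * bar T + T * bar X\<close> also equals \<open>bar T * X + bar X * T\<close>. Both facts
  follow by induction along the recursive definition: \<open>S * bar S\<close> and \<open>bar S * S\<close> are
  the same scalar matrix, and so are \<open>S1 * bar S2 + S2 * bar S1\<close> and
  \<open>bar S2 * S1 + bar S1 * S2\<close>, since in the block product the off-diagonal blocks cancel
  and the diagonal blocks are the same statement one level down.\<close>

lemma smult_one_mat_mult:
  "A \<in> carrier_mat n m \<Longrightarrow> (c \<cdot>\<^sub>m 1\<^sub>m n) * (A :: 'a::comm_ring_1 mat) = c \<cdot>\<^sub>m A"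
  by (simp add: mult_smult_assoc_mat[of _ n n _ m])

lemma mult_smult_one_mat:
  "A \<in> carrier_mat m n \<Longrightarrow> (A :: 'a::comm_ring_1 mat) * (c \<cdot>\<^sub>m 1\<^sub>m n) = c \<cdot>\<^sub>m A"
  by (simp add: mult_smult_distrib[of _ m n _ n])

lemma mult_scalar_diagonal_four_block_mat:
  fixes A B C D :: "'a::comm_ring_1 mat"
  assumes "A \<in> carrier_mat n n" "B \<in> carrier_mat n n" "C \<in> carrier_mat n n" "D \<in> carrier_mat n n"
  shows "four_block_mat (a \<cdot>\<^sub>m 1\<^sub>m n) A B (b \<cdot>\<^sub>m 1\<^sub>m n) * four_block_mat (c \<cdot>\<^sub>m 1\<^sub>m n) C D (d \<cdot>\<^sub>m 1\<^sub>m n)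
    = four_block_mat ((a * c) \<cdot>\<^sub>m 1\<^sub>m n + A * D) (a \<cdot>\<^sub>m C + d \<cdot>\<^sub>m A)
        (c \<cdot>\<^sub>m B + b \<cdot>\<^sub>m D) ((b * d) \<cdot>\<^sub>m 1\<^sub>m n + B * C)"
proof -
  have "(x \<cdot>\<^sub>m 1\<^sub>m n) * (y \<cdot>\<^sub>m 1\<^sub>m n) = (x * y) \<cdot>\<^sub>m 1\<^sub>m n" for x y :: 'a
    by (rule eq_matI) (auto simp: smult_one_mat_mult)
  with assms show ?thesis
    by (subst mult_four_block_mat[of _ n n _ n _ n _ _ n _ n])
       (auto simp: smult_one_mat_mult mult_smult_one_mat comm_add_mat[of _ n n])
qed

lemma suslin_dim [simp]:
  "dim_row (suslin m v w) = 2 ^ m" "dim_col (suslin m v w) = 2 ^ m"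
  "dim_row (suslin_bar m v w) = 2 ^ m" "dim_col (suslin_bar m v w) = 2 ^ m"
  by (induction m arbitrary: v w) (auto simp: suslin_def suslin_bar_def Let_def)

lemma suslin_carrier_mat [simp]:
  "suslin m v w \<in> carrier_mat (2 ^ m) (2 ^ m)"
  "suslin_bar m v w \<in> carrier_mat (2 ^ m) (2 ^ m)"
  by (simp_all add: carrier_matI)

lemma suslin_Suc:
  "suslin (Suc m) v w = four_block_mat (hd v \<cdot>\<^sub>m 1\<^sub>m (2 ^ m)) (suslin m (tl v) (tl w))
     (- suslin_bar m (tl v) (tl w)) (hd w \<cdot>\<^sub>m 1\<^sub>m (2 ^ m))"
  by (simp add: suslin_def suslin_bar_def Let_def)

lemma suslin_bar_Suc:
  "suslin_bar (Suc m) v w = four_block_mat (hd w \<cdot>\<^sub>m 1\<^sub>m (2 ^ m)) (- suslin m (tl v) (tl w))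
     (suslin_bar m (tl v) (tl w)) (hd v \<cdot>\<^sub>m 1\<^sub>m (2 ^ m))"
  by (simp add: suslin_def suslin_bar_def Let_def)

lemma suslin_mult_suslin_bar_scalar:
  "\<exists>d. suslin m v w * suslin_bar m v w = d \<cdot>\<^sub>m 1\<^sub>m (2 ^ m)
     \<and> suslin_bar m v w * suslin m v w = d \<cdot>\<^sub>m 1\<^sub>m (2 ^ m)"
proof (induction m arbitrary: v w)
  case 0
  show ?case
    by (rule exI[of _ "hd v * hd w"]) (auto simp: suslin_def suslin_bar_def scalar_prod_def intro!: eq_matI)
next
  case (Suc m)
  then obtain d where
    "suslin m (tl v) (tl w) * suslin_bar m (tl v) (tl w) = d \<cdot>\<^sub>m 1\<^sub>m (2 ^ m)"
    "suslin_bar m (tl v) (tl w) * suslin m (tl v) (tl w) = d \<cdot>\<^sub>m 1\<^sub>m (2 ^ m)"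
    by blast
  then show ?case
    by (intro exI[of _ "hd v * hd w + d"])
      (simp add: suslin_Suc suslin_bar_Suc mult_scalar_diagonal_four_block_mat
        uminus_carrier_mat, auto intro!: eq_matI)
qed

lemma suslin_bar_mult_suslin:
  "suslin_bar m v w * suslin m v w = suslin m v w * suslin_bar m v w"
  using suslin_mult_suslin_bar_scalar[of m v w] by auto

lemma suslin_form_scalar:
  "\<exists>c. suslin_form m v w v' w' = c \<cdot>\<^sub>m 1\<^sub>m (2 ^ m)
     \<and> suslin_bar m v' w' * suslin m v w + suslin_bar m v w * suslin m v' w' = c \<cdot>\<^sub>m 1\<^sub>m (2 ^ m)"
proof (induction m arbitrary: v w v' w')
  case 0
  show ?case
    by (rule exI[of _ "hd v * hd w' + hd v' * hd w"])
      (auto simp: suslin_form_def suslin_def suslin_bar_def scalar_prod_def intro!: eq_matI)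
next
  case (Suc m)
  let ?T = "suslin m (tl v) (tl w)" and ?Tb = "suslin_bar m (tl v) (tl w)"
    and ?T' = "suslin m (tl v') (tl w')" and ?Tb' = "suslin_bar m (tl v') (tl w')"
  from Suc obtain c where
    "?T * ?Tb' + ?T' * ?Tb = c \<cdot>\<^sub>m 1\<^sub>m (2 ^ m)" "?Tb' * ?T + ?Tb * ?T' = c \<cdot>\<^sub>m 1\<^sub>m (2 ^ m)"
    unfolding suslin_form_def by blast
  \<comment> \<open>The block entries are compared with matrix products kept as atoms, so the hypothesis
    is needed entrywise, solved for one product of each pair.\<close>
  then have entries: "(?T' * ?Tb) $$ (i, j) = (if i = j then c else 0) - (?T * ?Tb') $$ (i, j)"
    "(?Tb * ?T') $$ (i, j) = (if i = j then c else 0) - (?Tb' * ?T) $$ (i, j)"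
    if "i < 2 ^ m" "j < 2 ^ m" for i j
    using that by (auto dest!: arg_cong[where f = "\<lambda>M. M $$ (i, j)"] simp del: index_mult_mat
        simp: index_mult_mat(2,3) eq_diff_eq ac_simps)
  show ?case
    by (intro exI[of _ "hd v * hd w' + hd v' * hd w + c"])
      (simp add: suslin_form_def suslin_Suc suslin_bar_Suc mult_scalar_diagonal_four_block_mat
        add_four_block_mat[of _ "2 ^ m" "2 ^ m" _ "2 ^ m" _ "2 ^ m"] uminus_carrier_mat,
       auto intro!: eq_matI simp del: index_mult_mat simp: index_mult_mat(2,3) entries algebra_simps)
qed

lemma suslin_form_commute:
  "suslin_bar m v' w' * suslin m v w + suslin_bar m v w * suslin m v' w' = suslin_form m v w v' w'"
  using suslin_form_scalar[of m v w v' w'] by auto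

lemma four_block_upper_unipotent_conj:
  fixes X Xb T Tb :: "'a::comm_ring_1 mat"
  assumes "X \<in> carrier_mat n n" "Xb \<in> carrier_mat n n" "T \<in> carrier_mat n n" "Tb \<in> carrier_mat n n"
    and "X * Xb = 0\<^sub>m n n"
  shows "four_block_mat (1\<^sub>m n) X (0\<^sub>m n n) (1\<^sub>m n) * four_block_mat (a \<cdot>\<^sub>m 1\<^sub>m n) T (- Tb) (b \<cdot>\<^sub>m 1\<^sub>m n)
      * four_block_mat (1\<^sub>m n) (0\<^sub>m n n) (- Xb) (1\<^sub>m n)
    = four_block_mat (a \<cdot>\<^sub>m 1\<^sub>m n - (X * Tb + T * Xb)) (T + b \<cdot>\<^sub>m X) (- Tb - b \<cdot>\<^sub>m Xb) (b \<cdot>\<^sub>m 1\<^sub>m n)"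
  using assms
  by (simp add: mult_four_block_mat[of _ n n _ n _ n _ _ n _ n] uminus_carrier_mat
      add_mult_distrib_mat[of _ n n _ _ n] mult_smult_assoc_mat[of _ n n _ n] smult_one_mat_mult mult_smult_one_mat,
    auto intro!: eq_matI simp del: index_mult_mat simp: index_mult_mat(2,3) algebra_simps)

lemma four_block_lower_unipotent_conj:
  fixes X Xb T Tb :: "'a::comm_ring_1 mat"
  assumes "X \<in> carrier_mat n n" "Xb \<in> carrier_mat n n" "T \<in> carrier_mat n n" "Tb \<in> carrier_mat n n"
    and "Xb * X = 0\<^sub>m n n"
  shows "four_block_mat (1\<^sub>m n) (0\<^sub>m n n) (- Xb) (1\<^sub>m n) * four_block_mat (a \<cdot>\<^sub>m 1\<^sub>m n) T (- Tb) (b \<cdot>\<^sub>m 1\<^sub>m n)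
      * four_block_mat (1\<^sub>m n) X (0\<^sub>m n n) (1\<^sub>m n)
    = four_block_mat (a \<cdot>\<^sub>m 1\<^sub>m n) (T + a \<cdot>\<^sub>m X) (- Tb - a \<cdot>\<^sub>m Xb) (b \<cdot>\<^sub>m 1\<^sub>m n - (Tb * X + Xb * T))"
  using assms
  by (simp add: mult_four_block_mat[of _ n n _ n _ n _ _ n _ n] uminus_carrier_mat
      add_mult_distrib_mat[of _ n n _ _ n] mult_smult_assoc_mat[of _ n n _ n] smult_one_mat_mult mult_smult_one_mat,
    auto intro!: eq_matI simp del: index_mult_mat simp: index_mult_mat(2,3) algebra_simps)

theorem lemma3p3:
  fixes v w v' w' :: "'a::comm_ring_1 list" and a b :: 'a and k :: nat
  assumes "k \<ge> 1"
    and "length v = Suc k" and "length w = Suc k"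
    and "length v' = Suc k" and "length w' = Suc k"
    and "suslin k v w * suslin_bar k v w = 0\<^sub>m (2 ^ k) (2 ^ k)"
  shows
    "(four_block_mat (1\<^sub>m (2 ^ k)) (suslin k v w) (0\<^sub>m (2 ^ k) (2 ^ k)) (1\<^sub>m (2 ^ k))
       * four_block_mat (a \<cdot>\<^sub>m 1\<^sub>m (2 ^ k)) (suslin k v' w') (- suslin_bar k v' w') (b \<cdot>\<^sub>m 1\<^sub>m (2 ^ k))
       * four_block_mat (1\<^sub>m (2 ^ k)) (0\<^sub>m (2 ^ k) (2 ^ k)) (- suslin_bar k v w) (1\<^sub>m (2 ^ k))
     = four_block_mat (a \<cdot>\<^sub>m 1\<^sub>m (2 ^ k) - suslin_form k v w v' w')
         (suslin k v' w' + b \<cdot>\<^sub>m suslin k v w)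
         (- suslin_bar k v' w' - b \<cdot>\<^sub>m suslin_bar k v w)
         (b \<cdot>\<^sub>m 1\<^sub>m (2 ^ k))) \<and>
    (four_block_mat (1\<^sub>m (2 ^ k)) (0\<^sub>m (2 ^ k) (2 ^ k)) (- suslin_bar k v w) (1\<^sub>m (2 ^ k))
       * four_block_mat (a \<cdot>\<^sub>m 1\<^sub>m (2 ^ k)) (suslin k v' w') (- suslin_bar k v' w') (b \<cdot>\<^sub>m 1\<^sub>m (2 ^ k))
       * four_block_mat (1\<^sub>m (2 ^ k)) (suslin k v w) (0\<^sub>m (2 ^ k) (2 ^ k)) (1\<^sub>m (2 ^ k))
     = four_block_mat (a \<cdot>\<^sub>m 1\<^sub>m (2 ^ k))
         (suslin k v' w' + a \<cdot>\<^sub>m suslin k v w)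
         (- suslin_bar k v' w' - a \<cdot>\<^sub>m suslin_bar k v w)
         (b \<cdot>\<^sub>m 1\<^sub>m (2 ^ k) - suslin_form k v w v' w'))"
proof -
  let ?X = "suslin k v w" and ?Xb = "suslin_bar k v w"
    and ?T = "suslin k v' w'" and ?Tb = "suslin_bar k v' w'"
  have "?Xb * ?X = 0\<^sub>m (2 ^ k) (2 ^ k)"
    using assms(6) by (simp add: suslin_bar_mult_suslin)
  then show ?thesis
    using four_block_upper_unipotent_conj[of ?X "2 ^ k" ?Xb ?T ?Tb a b]
      four_block_lower_unipotent_conj[of ?X "2 ^ k" ?Xb ?T ?Tb a b] assms(6)
    by (simp add: suslin_form_def[symmetric] suslin_form_commute)
qed

end
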